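(* Let $(X,Z)\in\mathbb{R}^n\times\mathbb{R}^{n\times p}$ be any fixed design, $\mathcal{R}\subseteq[n]$ any row set, $\alpha\in(0,1)$, and let $P_{\pi\mid\mathcal{R}}$ be uniformly distributed on $\mathcal{S}_{n\mid\mathcal{R}}$. Let $D_\mathcal{R}=\|(I-H_{P_{\pi\mid\mathcal{R}}X,Z,P_{\pi\mid\mathcal{R}}Z})X\|_2^2$ with $\alpha$-quantile $F^{-1}_{D_\mathcal{R}}(\alpha;X,Z)$, and let $\mu_\mathcal{R}(Z)=E\{\mathrm{rank}(Z-P_{\pi\mid\mathcal{R}}Z)\}$. Then: (i) if $pr(X\in\mathcal{C}(Z,P_{\pi\mid\mathcal{R}}Z))\ge\alpha$, then $F^{-1}_{D_\mathcal{R}}(\alpha;X,Z)=0$; (ii) $\mu_\mathcal{R}(Z)\ge\mu_{\mathcal{R}\cup\{k\}}(Z)$ for any $k\in[n]\setminus\mathcal{R}$.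
   Context: $[n]=\{1,\dots,n\}$. $\mathcal{C}(M)$ is the column space of $M$ and $H_M$ the orthogonal projection onto it; $H_{A,B,C}$ is the projection onto the column space of $(A,B,C)$. For $\mathcal{R}\subseteq[n]$, $\mathcal{S}_{n\mid\mathcal{R}}$ is the group of $n\times n$ permutation matrices that fix every row index in $\mathcal{R}$ (diagonal entry $1$ at each $i\in\mathcal{R}$). The $\alpha$-quantile of a random variable $D$ is $F_D^{-1}(\alpha)=\inf\{x:pr(D\le x)\ge\alpha\}$. *)

theory Defs
  imports "HOL-Analysis.Analysis" "HOL-Combinatorics.Permutations"
begin

text \<open>Rows are indexed by the finite type 'n (so [n] = UNIV), columns of Z by 'p.\<close>

definition perm_mat :: "('n::finite \<Rightarrow> 'n) \<Rightarrow> real^'n^'n" where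
  "perm_mat \<sigma> = (\<chi> i j. if \<sigma> i = j then 1 else 0)"

definition perm_mats_fixing :: "'n::finite set \<Rightarrow> (real^'n^'n) set" where
  "perm_mats_fixing R = {P. (\<exists>\<sigma>. \<sigma> permutes (UNIV::'n set) \<and> P = perm_mat \<sigma>) \<and> (\<forall>i\<in>R. P $ i $ i = 1)}"

definition unif_pr :: "'a set \<Rightarrow> ('a \<Rightarrow> bool) \<Rightarrow> real" where
  "unif_pr S Q = real (card {x\<in>S. Q x}) / real (card S)"

definition unif_exp :: "'a set \<Rightarrow> ('a \<Rightarrow> real) \<Rightarrow> real" where
  "unif_exp S f = (\<Sum>x\<in>S. f x) / real (card S)"

definition unif_quantile :: "'a set \<Rightarrow> ('a \<Rightarrow> real) \<Rightarrow> real \<Rightarrow> real" where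
  "unif_quantile S D \<alpha> = Inf {x. unif_pr S (\<lambda>a. D a \<le> x) \<ge> \<alpha>}"

definition orth_proj :: "(real^'n) set \<Rightarrow> real^'n \<Rightarrow> real^'n" where
  "orth_proj V x = (THE y. y \<in> V \<and> (\<forall>v\<in>V. (x - y) \<bullet> v = 0))"

definition colspace_vmm :: "real^'n \<Rightarrow> real^'p^'n \<Rightarrow> real^'p^'n \<Rightarrow> (real^'n) set" where
  "colspace_vmm a B C = span (insert a (columns B \<union> columns C))"

definition colspace_mm :: "real^'p^'n \<Rightarrow> real^'p^'n \<Rightarrow> (real^'n) set" where
  "colspace_mm B C = span (columns B \<union> columns C)"

definition Dstat :: "real^'n \<Rightarrow> real^'p^'n \<Rightarrow> real^'n^'n \<Rightarrow> real" where
  "Dstat X Z P = (norm (X - orth_proj (colspace_vmm (P *v X) Z (P ** Z)) X))\<^sup>2"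

definition mu :: "'n::finite set \<Rightarrow> real^'p^'n \<Rightarrow> real" where
  "mu R Z = unif_exp (perm_mats_fixing R) (\<lambda>P. real (rank (Z - P ** Z)))"

end

theory Submission
  imports Defs
begin

text \<open>
  (i) On the event \<open>X \<in> C(Z, PZ)\<close> the vector \<open>X\<close> already lies in \<open>C(PX, Z, PZ)\<close>, so the
  residual \<open>D\<close> vanishes there; as \<open>D \<ge> 0\<close>, an event of probability at least \<open>\<alpha>\<close> on which
  \<open>D = 0\<close> forces the \<open>\<alpha>\<close>-quantile to be \<open>0\<close>.

  (ii) A permutation \<open>s\<close> fixing \<open>R\<close> factors uniquely as \<open>t \<circ> (j k)\<close> with \<open>t\<close> fixing
  \<open>R \<union> {k}\<close> and \<open>j = s\<inverse>(k) \<notin> R\<close>. Row \<open>i\<close> of \<open>Z - P\<^sub>sZ\<close> is \<open>Z\<^sub>i - Z\<^bsub>s(i)\<^esub>\<close>, and row \<open>j\<close> of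
  \<open>Z - P\<^sub>tZ\<close> is the sum of rows \<open>j\<close> and \<open>k\<close> of \<open>Z - P\<^sub>sZ\<close>, while its other rows are rows of
  \<open>Z - P\<^sub>sZ\<close> or zero. Hence \<open>rank (Z - P\<^sub>tZ) \<le> rank (Z - P\<^sub>sZ)\<close>, and averaging over the
  factorisation compares the two expectations.
\<close>

definition perms_fixing :: "'n::finite set \<Rightarrow> ('n \<Rightarrow> 'n) set" where
  "perms_fixing R = {s. s permutes UNIV \<and> (\<forall>i\<in>R. s i = i)}"

lemma finite_perms_fixing: "finite (perms_fixing R)"
  unfolding perms_fixing_def
  by (rule finite_subset[OF _ finite_permutations[of UNIV]]) auto

lemma inj_perm_mat: "inj perm_mat"
proof (rule injI)
  fix s t :: "'n::finite \<Rightarrow> 'n"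
  assume "perm_mat s = perm_mat t"
  then have "\<forall>i. perm_mat s $ i $ s i = perm_mat t $ i $ s i"
    by simp
  then show "s = t"
    by (auto simp: perm_mat_def fun_eq_iff split: if_splits)
qed

lemma perm_mats_fixing_eq_image: "perm_mats_fixing R = perm_mat ` perms_fixing R"
proof
  show "perm_mats_fixing R \<subseteq> perm_mat ` perms_fixing R"
  proof
    fix P
    assume "P \<in> perm_mats_fixing R"
    then obtain s where "s permutes UNIV" "P = perm_mat s" "\<forall>i\<in>R. P $ i $ i = 1"
      unfolding perm_mats_fixing_def by blast
    moreover from this have "\<forall>i\<in>R. s i = i"
      by (auto simp: perm_mat_def split: if_splits)
    ultimately show "P \<in> perm_mat ` perms_fixing R"
      unfolding perms_fixing_def by blast
  qed
qed (auto simp: perm_mats_fixing_def perms_fixing_def perm_mat_def)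

lemma finite_perm_mats_fixing: "finite (perm_mats_fixing R)"
  by (simp add: perm_mats_fixing_eq_image finite_perms_fixing)

lemma perm_mat_matrix_mult_row: "(perm_mat s ** Z) $ i = Z $ s i"
proof -
  have "(perm_mat s ** Z) $ i $ j = Z $ s i $ j" for j
  proof -
    have "(perm_mat s ** Z) $ i $ j = (\<Sum>k\<in>UNIV. (if s i = k then 1 else 0) * Z $ k $ j)"
      by (simp add: matrix_matrix_mult_def perm_mat_def)
    also have "\<dots> = (\<Sum>k\<in>UNIV. if k = s i then Z $ k $ j else 0)"
      by (rule sum.cong) auto
    finally show ?thesis
      by simp
  qed
  then show ?thesis
    by (simp add: vec_eq_iff)
qed

lemma orth_proj_id:
  assumes "subspace V" and "x \<in> V"
  shows "orth_proj V x = x"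
  unfolding orth_proj_def
proof (rule the_equality)
  fix y
  assume y: "y \<in> V \<and> (\<forall>v\<in>V. (x - y) \<bullet> v = 0)"
  then have "x - y \<in> V"
    using assms subspace_diff by blast
  with y have "(x - y) \<bullet> (x - y) = 0"
    by blast
  then show "y = x"
    by simp
qed (use assms in simp)

lemma Dstat_nonneg: "0 \<le> Dstat X Z P"
  by (simp add: Dstat_def)

lemma Dstat_eq_0_if_in_colspace:
  assumes "X \<in> colspace_mm Z (P ** Z)"
  shows "Dstat X Z P = 0"
proof -
  have "colspace_mm Z (P ** Z) \<subseteq> colspace_vmm (P *v X) Z (P ** Z)"
    unfolding colspace_mm_def colspace_vmm_def by (rule span_mono) blast
  with assms have "orth_proj (colspace_vmm (P *v X) Z (P ** Z)) X = X"
    by (intro orth_proj_id) (auto simp: colspace_vmm_def subspace_span)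
  then show ?thesis
    by (simp add: Dstat_def)
qed

lemma unif_pr_mono:
  assumes "finite S" and "\<And>a. a \<in> S \<Longrightarrow> Q a \<Longrightarrow> Q' a"
  shows "unif_pr S Q \<le> unif_pr S Q'"
proof -
  have "card {a\<in>S. Q a} \<le> card {a\<in>S. Q' a}"
    using assms by (intro card_mono) auto
  then show ?thesis
    unfolding unif_pr_def by (simp add: divide_right_mono)
qed

lemma unif_quantile_eq_0:
  assumes "finite S" and "0 < \<alpha>"
    and nonneg: "\<And>a. a \<in> S \<Longrightarrow> 0 \<le> D a"
    and zero: "\<And>a. a \<in> S \<Longrightarrow> Q a \<Longrightarrow> D a = 0"
    and "\<alpha> \<le> unif_pr S Q"
  shows "unif_quantile S D \<alpha> = 0"
proof -
  have "\<alpha> \<le> unif_pr S (\<lambda>a. D a \<le> x) \<longleftrightarrow> 0 \<le> x" for x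
  proof
    assume "\<alpha> \<le> unif_pr S (\<lambda>a. D a \<le> x)"
    with \<open>0 < \<alpha>\<close> have "{a\<in>S. D a \<le> x} \<noteq> {}"
      by (cases "{a\<in>S. D a \<le> x} = {}") (auto simp: unif_pr_def)
    with nonneg show "0 \<le> x"
      by force
  next
    assume "0 \<le> x"
    with zero have "unif_pr S Q \<le> unif_pr S (\<lambda>a. D a \<le> x)"
      by (intro unif_pr_mono[OF \<open>finite S\<close>]) auto
    with \<open>\<alpha> \<le> unif_pr S Q\<close> show "\<alpha> \<le> unif_pr S (\<lambda>a. D a \<le> x)"
      by simp
  qed
  then have "{x. \<alpha> \<le> unif_pr S (\<lambda>a. D a \<le> x)} = {0..}"
    by auto
  then show ?thesis
    by (simp add: unif_quantile_def)
qed

lemma unif_exp_image: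
  assumes "inj_on g S"
  shows "unif_exp (g ` S) f = unif_exp S (f \<circ> g)"
  using assms by (simp add: unif_exp_def sum.reindex card_image)

lemma unif_exp_le_of_bij_betw_Times:
  fixes f g :: "'a \<Rightarrow> real"
  assumes bij: "bij_betw \<phi> (A \<times> J) B" and "finite J" "J \<noteq> {}"
    and le: "\<And>a j. a \<in> A \<Longrightarrow> j \<in> J \<Longrightarrow> f a \<le> g (\<phi> (a, j))"
  shows "unif_exp A f \<le> unif_exp B g"
proof -
  have J_pos: "0 < real (card J)"
    using assms by (simp add: card_gt_0_iff)
  have card_B: "card B = card A * card J"
    using bij_betw_same_card[OF bij] by (simp add: card_cartesian_product)
  have "real (card J) * (\<Sum>a\<in>A. f a) = (\<Sum>a\<in>A. \<Sum>j\<in>J. f a)"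
    by (simp add: sum_distrib_left)
  also have "\<dots> \<le> (\<Sum>a\<in>A. \<Sum>j\<in>J. g (\<phi> (a, j)))"
    using le by (intro sum_mono) auto
  also have "\<dots> = (\<Sum>p\<in>A \<times> J. g (\<phi> p))"
    by (simp add: sum.cartesian_product split_def)
  also have "\<dots> = (\<Sum>b\<in>B. g b)"
    using sum.reindex_bij_betw[OF bij] .
  finally have sum_le: "real (card J) * (\<Sum>a\<in>A. f a) \<le> (\<Sum>b\<in>B. g b)" .
  have "unif_exp A f = real (card J) * (\<Sum>a\<in>A. f a) / real (card B)"
    using J_pos by (simp add: unif_exp_def card_B)
  also have "\<dots> \<le> unif_exp B g"
    unfolding unif_exp_def using sum_le by (rule divide_right_mono) simp
  finally show ?thesis .
qed

lemma mu_eq_unif_exp_perms_fixing: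
  "mu R Z = unif_exp (perms_fixing R) (\<lambda>s. real (rank (Z - perm_mat s ** Z)))"
proof -
  have "inj_on perm_mat (perms_fixing R)"
    using inj_perm_mat by (rule inj_on_subset) simp
  then show ?thesis
    by (simp add: mu_def perm_mats_fixing_eq_image unif_exp_image comp_def)
qed

lemma rank_le_if_rows_in_span:
  fixes A B :: "real^'m^'n"
  assumes "\<And>i. row i A \<in> span (rows B)"
  shows "rank A \<le> rank B"
  using assms by (auto simp: row_rank_def rows_def intro: dim_mono)

lemma row_diff_perm_mat: "row i (Z - perm_mat s ** Z) = Z $ i - Z $ s i"
  by (simp add: row_def vec_eq_iff perm_mat_matrix_mult_row)

lemma rank_diff_perm_mat_le_compose_transpose:
  fixes Z :: "real^'p::finite^'n::finite"
  assumes "t k = k"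
  shows "rank (Z - perm_mat t ** Z) \<le> rank (Z - perm_mat (t \<circ> Transposition.transpose j k) ** Z)"
proof (rule rank_le_if_rows_in_span)
  fix i
  let ?s = "t \<circ> Transposition.transpose j k"
  let ?V = "span (rows (Z - perm_mat ?s ** Z))"
  have row_s: "row m (Z - perm_mat ?s ** Z) \<in> ?V" for m
    by (rule span_base) (auto simp: rows_def)
  consider "i = k" | "i = j" "i \<noteq> k" | "i \<noteq> j" "i \<noteq> k"
    by blast
  then show "row i (Z - perm_mat t ** Z) \<in> ?V"
  proof cases
    case 1
    with assms show ?thesis
      by (simp add: row_diff_perm_mat span_zero)
  next
    case 2
    with assms have "row i (Z - perm_mat t ** Z)
        = row j (Z - perm_mat ?s ** Z) + row k (Z - perm_mat ?s ** Z)"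
      by (simp add: row_diff_perm_mat)
    then show ?thesis
      by (simp add: row_s span_add)
  next
    case 3
    then have "row i (Z - perm_mat t ** Z) = row i (Z - perm_mat ?s ** Z)"
      by (simp add: row_diff_perm_mat)
    then show ?thesis
      by (simp add: row_s)
  qed
qed

lemma bij_betw_perms_fixing_insert:
  assumes "k \<notin> R"
  shows "bij_betw (\<lambda>(t, j). t \<circ> Transposition.transpose j k)
           (perms_fixing (insert k R) \<times> - R) (perms_fixing R)"
proof (rule bij_betw_byWitness[where f' = "\<lambda>s. (s \<circ> Transposition.transpose (inv s k) k, inv s k)"])
  have inv_k: "inv (t \<circ> Transposition.transpose j k) k = j"
    if "t \<in> perms_fixing (insert k R)" for t j
  proof -
    from that have "t permutes UNIV" "t k = k"
      by (auto simp: perms_fixing_def)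
    then have "t \<circ> Transposition.transpose j k permutes UNIV"
      and "(t \<circ> Transposition.transpose j k) j = k"
      by (simp_all add: permutes_compose permutes_swap_id)
    then show ?thesis
      using permutes_inverses(2) by metis
  qed
  then show "\<forall>p\<in>perms_fixing (insert k R) \<times> - R.
      (\<lambda>s. (s \<circ> Transposition.transpose (inv s k) k, inv s k))
        ((\<lambda>(t, j). t \<circ> Transposition.transpose j k) p) = p"
    by (auto simp: comp_assoc)
  show "\<forall>s\<in>perms_fixing R. (\<lambda>(t, j). t \<circ> Transposition.transpose j k)
      ((\<lambda>s. (s \<circ> Transposition.transpose (inv s k) k, inv s k)) s) = s"
    by (simp add: comp_assoc)
  show "(\<lambda>(t, j). t \<circ> Transposition.transpose j k) ` (perms_fixing (insert k R) \<times> - R)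
      \<subseteq> perms_fixing R"
  proof clarify
    fix t j
    assume "t \<in> perms_fixing (insert k R)" and "j \<notin> R"
    then have "t permutes UNIV" and "\<forall>i\<in>R. i \<noteq> j \<and> i \<noteq> k \<and> t i = i"
      using assms by (auto simp: perms_fixing_def)
    then show "t \<circ> Transposition.transpose j k \<in> perms_fixing R"
      by (simp add: perms_fixing_def permutes_compose permutes_swap_id)
  qed
  show "(\<lambda>s. (s \<circ> Transposition.transpose (inv s k) k, inv s k)) ` perms_fixing R
      \<subseteq> perms_fixing (insert k R) \<times> - R"
  proof clarify
    fix s
    assume "s \<in> perms_fixing R"
    then have perm: "s permutes UNIV" and fix_R: "\<forall>i\<in>R. s i = i"
      by (auto simp: perms_fixing_def)
    define j where "j = inv s k"
    have s_j: "s j = k"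
      using permutes_inverses(1)[OF perm] by (simp add: j_def)
    with fix_R assms have j_notin: "j \<notin> R"
      by metis
    have "\<forall>i\<in>R. i \<noteq> j \<and> i \<noteq> k \<and> s i = i"
      using fix_R j_notin assms by auto
    with s_j have "\<forall>i\<in>insert k R. (s \<circ> Transposition.transpose j k) i = i"
      by simp
    with perm j_notin show "s \<circ> Transposition.transpose (inv s k) k \<in> perms_fixing (insert k R)
        \<and> inv s k \<in> - R"
      by (simp add: perms_fixing_def permutes_compose permutes_swap_id j_def)
  qed
qed

lemma mu_insert_le:
  assumes "k \<notin> R"
  shows "mu (insert k R) Z \<le> mu R Z"
  unfolding mu_eq_unif_exp_perms_fixing
proof (rule unif_exp_le_of_bij_betw_Times[OF bij_betw_perms_fixing_insert[OF assms]])
  show "- R \<noteq> {}"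
    using assms by blast
  fix t j
  assume "t \<in> perms_fixing (insert k R)"
  then have "t k = k"
    by (simp add: perms_fixing_def)
  then show "real (rank (Z - perm_mat t ** Z))
      \<le> real (rank (Z - perm_mat ((\<lambda>(t, j). t \<circ> Transposition.transpose j k) (t, j)) ** Z))"
    by (simp add: rank_diff_perm_mat_le_compose_transpose)
qed (simp_all add: finite_perms_fixing)

theorem proposition2:
  fixes X :: "real^'n::finite" and Z :: "real^'p::finite^'n" and R :: "'n set" and \<alpha> :: real
  assumes "0 < \<alpha>" and "\<alpha> < 1"
  shows "(unif_pr (perm_mats_fixing R) (\<lambda>P. X \<in> colspace_mm Z (P ** Z)) \<ge> \<alpha>
            \<longrightarrow> unif_quantile (perm_mats_fixing R) (Dstat X Z) \<alpha> = 0)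
       \<and> (\<forall>k. k \<notin> R \<longrightarrow> mu R Z \<ge> mu (insert k R) Z)"
proof (intro conjI impI allI)
  assume "unif_pr (perm_mats_fixing R) (\<lambda>P. X \<in> colspace_mm Z (P ** Z)) \<ge> \<alpha>"
  with unif_quantile_eq_0[OF finite_perm_mats_fixing \<open>0 < \<alpha>\<close>,
      where D = "Dstat X Z" and Q = "\<lambda>P. X \<in> colspace_mm Z (P ** Z)"]
  show "unif_quantile (perm_mats_fixing R) (Dstat X Z) \<alpha> = 0"
    by (simp add: Dstat_nonneg Dstat_eq_0_if_in_colspace)
next
  fix k
  assume "k \<notin> R"
  then show "mu R Z \<ge> mu (insert k R) Z"
    by (rule mu_insert_le)
qed

end
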